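(* For $\sigma^2>0$ let $\Phi(\cdot;\sigma^2)$ denote the cumulative distribution function of $\mathcal{N}(0,\sigma^2)$. Fix $\alpha\ge0$ and $\beta^2\in(0,1)$. Let $\lambda_1\ge\lambda_2\ge0$ and $\sigma_1^2,\sigma_2^2\ge1$ satisfy $\lambda_1-\lambda_2\le\alpha$ and $\frac{\sigma_1^2}{\sigma_2^2},\frac{\sigma_2^2}{\sigma_1^2}\in[1-\beta^2,1+\beta^2]$. Let \[ X=\sqrt{\frac{8}{\pi}}\,\frac{\alpha+\beta^2\lambda_1}{\min\{\sigma_1,\sigma_2\}}\exp\Big(-\frac{\lambda_2^2(1-\beta^2)}{2\max\{\sigma_1^2,\sigma_2^2\}}\Big). \] Then both $\frac{\Phi(\lambda_1;\sigma_1^2)}{\Phi(\lambda_2;\sigma_2^2)}$ and $\frac{\Phi(\lambda_2;\sigma_2^2)}{\Phi(\lambda_1;\sigma_1^2)}$ lie in $[1-\beta^2-X,\ 1+\beta^2+X]$. *)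

theory Defs
  imports "HOL-Probability.Probability"
begin

definition normal_cdf :: "real \<Rightarrow> real \<Rightarrow> real" where
  "normal_cdf x v = measure (density lborel (normal_density 0 (sqrt v))) {..x}"

end

theory Submission imports Defs begin

(* After rescaling, both values are values of the standard normal cdf Phi, at the points
   t1 = l1 / sigma1 and t2 = l2 / sigma2. These are nonnegative, so Phi t1, Phi t2 >= 1/2 by
   symmetry of the Gaussian, and both ratios differ from 1 by at most 2 |Phi t1 - Phi t2|.
   As the density decreases on [0, oo), this difference is at most |t1 - t2| times the density
   at min t1 t2. Comparable variances give |sigma1 - sigma2| <= beta^2 min sigma1 sigma2, whence
   |t1 - t2| <= (alpha + beta^2 l1) / min sigma1 sigma2, while min t1 t2 >= l2 / max sigma1 sigma2
   bounds the density by the exponential factor of X. So both ratios are even within X/2 of 1. *)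

definition std_normal_cdf :: "real \<Rightarrow> real" where
  "std_normal_cdf t = (\<integral>x. std_normal_density x * indicator {..t} x \<partial>lborel)"

lemma integrable_std_normal_density_indicator:
  "A \<in> sets borel \<Longrightarrow> integrable lborel (\<lambda>x. std_normal_density x * indicator A x)"
  by (intro integrable_real_mult_indicator) auto

lemma normal_density_zero_mean_scale:
  "0 < \<sigma> \<Longrightarrow> normal_density 0 \<sigma> (\<sigma> * x) = std_normal_density x / \<sigma>"
  unfolding normal_density_def by (simp add: power_mult_distrib real_sqrt_mult field_simps)

lemma normal_cdf_eq_std_normal_cdf:
  assumes "0 < s"
  shows "normal_cdf x s = std_normal_cdf (x / sqrt s)"
proof -
  define \<sigma> where "\<sigma> = sqrt s"
  have \<sigma>: "0 < \<sigma>" using assms by (simp add: \<sigma>_def)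
  have indicator_scale: "indicator {..x} (\<sigma> * y) = (indicator {..x / \<sigma>} y :: real)" for y
    using pos_le_divide_eq[OF \<sigma>, of y x] by (auto simp: indicator_def mult.commute)
  have "normal_cdf x s = integral\<^sup>L (density lborel (normal_density 0 \<sigma>)) (indicator {..x})"
    unfolding normal_cdf_def \<sigma>_def by simp
  also have "\<dots> = (\<integral>y. normal_density 0 \<sigma> y * indicator {..x} y \<partial>lborel)"
    by (subst integral_density) auto
  also have "\<dots> = \<bar>\<sigma>\<bar> *\<^sub>R (\<integral>y. normal_density 0 \<sigma> (0 + \<sigma> * y) * indicator {..x} (0 + \<sigma> * y) \<partial>lborel)"
    by (rule lborel_integral_real_affine) (use \<sigma> in simp)
  also have "\<dots> = std_normal_cdf (x / \<sigma>)"
    using \<sigma> by (simp add: normal_density_zero_mean_scale indicator_scale std_normal_cdf_def)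
  finally show ?thesis by (simp add: \<sigma>_def)
qed

lemma std_normal_cdf_diff:
  assumes "a \<le> b"
  shows "std_normal_cdf b - std_normal_cdf a = (\<integral>x. std_normal_density x * indicator {a<..b} x \<partial>lborel)"
proof -
  have "std_normal_cdf b - std_normal_cdf a
      = (\<integral>x. std_normal_density x * indicator {..b} x - std_normal_density x * indicator {..a} x \<partial>lborel)"
    unfolding std_normal_cdf_def
    by (rule Bochner_Integration.integral_diff[symmetric])
       (auto intro: integrable_std_normal_density_indicator)
  also have "\<dots> = (\<integral>x. std_normal_density x * indicator {a<..b} x \<partial>lborel)"
    using assms by (intro Bochner_Integration.integral_cong) (auto simp: indicator_def)
  finally show ?thesis .
qed

lemma std_normal_cdf_mono:
  assumes "a \<le> b"
  shows "std_normal_cdf a \<le> std_normal_cdf b"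
proof -
  have "0 \<le> (\<integral>x. std_normal_density x * indicator {a<..b} x \<partial>lborel)"
    by (rule Bochner_Integration.integral_nonneg) simp
  then show ?thesis using std_normal_cdf_diff[OF assms] by linarith
qed

lemma std_normal_cdf_minus: "std_normal_cdf (- t) = 1 - std_normal_cdf t"
proof -
  have "std_normal_cdf (- t)
      = \<bar>-1\<bar> *\<^sub>R (\<integral>x. std_normal_density (0 + -1 * x) * indicator {..- t} (0 + -1 * x) \<partial>lborel)"
    unfolding std_normal_cdf_def by (rule lborel_integral_real_affine) simp
  also have "\<dots> = (\<integral>x. std_normal_density x * indicator {t<..} x \<partial>lborel)"
  proof -
    \<comment> \<open>the reflection of {..- t} is {t..}, which differs from {t<..} by the null set {t}\<close>
    have "AE x in lborel. x \<noteq> t" by (rule AE_lborel_singleton)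
    then show ?thesis
      by (simp, intro integral_cong_AE) (auto simp: std_normal_density_def indicator_def)
  qed
  also have "\<dots> = (\<integral>x. std_normal_density x - std_normal_density x * indicator {..t} x \<partial>lborel)"
    by (intro Bochner_Integration.integral_cong) (auto simp: indicator_def)
  also have "\<dots> = (\<integral>x. std_normal_density x \<partial>lborel) - std_normal_cdf t"
    unfolding std_normal_cdf_def
    by (rule Bochner_Integration.integral_diff) (auto intro: integrable_std_normal_density_indicator)
  finally show ?thesis by simp
qed

lemma std_normal_cdf_ge_half: "0 \<le> t \<Longrightarrow> 1 / 2 \<le> std_normal_cdf t"
  using std_normal_cdf_mono[of "- t" t] std_normal_cdf_minus[of t] by simp

lemma std_normal_cdf_diff_le:
  assumes "0 \<le> a" "a \<le> b"
  shows "std_normal_cdf b - std_normal_cdf a \<le> (b - a) * std_normal_density a"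
proof -
  have "std_normal_cdf b - std_normal_cdf a = (\<integral>x. std_normal_density x * indicator {a<..b} x \<partial>lborel)"
    using assms(2) by (rule std_normal_cdf_diff)
  also have "\<dots> \<le> (\<integral>x. std_normal_density a * indicator {a<..b} x \<partial>lborel)"
  proof (intro integral_mono integrable_std_normal_density_indicator)
    show "integrable lborel (\<lambda>x. std_normal_density a * indicator {a<..b} x)"
      using assms by (simp add: integrable_indicator_iff emeasure_lborel_Ioc)
    show "std_normal_density x * indicator {a<..b} x \<le> std_normal_density a * indicator {a<..b} x"
      for x
    proof (cases "x \<in> {a<..b}")
      case True
      then have "a\<^sup>2 \<le> x\<^sup>2" using assms by (intro power_mono) auto
      then show ?thesis using True by (simp add: std_normal_density_def divide_right_mono)
    qed simp
  qed simp
  also have "\<dots> = (b - a) * std_normal_density a" using assms by simp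
  finally show ?thesis .
qed

lemma abs_std_normal_cdf_diff_le:
  assumes "0 \<le> a" "0 \<le> b"
  shows "\<bar>std_normal_cdf a - std_normal_cdf b\<bar> \<le> \<bar>a - b\<bar> * std_normal_density (min a b)"
proof (cases "a \<le> b")
  case True
  then show ?thesis
    using std_normal_cdf_diff_le[of a b] std_normal_cdf_mono[of a b] assms by (simp add: min_def)
next
  case False
  then show ?thesis
    using std_normal_cdf_diff_le[of b a] std_normal_cdf_mono[of b a] assms by (simp add: min_def)
qed

lemma std_normal_density_le_exp:
  "c \<le> x\<^sup>2 \<Longrightarrow> std_normal_density x \<le> exp (- c / 2) / sqrt (2 * pi)"
  by (simp add: std_normal_density_def divide_right_mono)

lemma sqrt_diff_le_of_divide_le:
  fixes s s' b :: real
  assumes "0 < s" "0 \<le> b" "s' / s \<le> 1 + b"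
  shows "sqrt s' - sqrt s \<le> b * sqrt s"
proof -
  have "s' \<le> (1 + b) * s" using assms by (simp add: divide_le_eq)
  also have "\<dots> \<le> (1 + b)\<^sup>2 * s"
    using assms by (intro mult_right_mono) (auto simp: power2_eq_square field_simps)
  also have "\<dots> = ((1 + b) * sqrt s)\<^sup>2"
    using assms by (simp add: power_mult_distrib)
  finally have "sqrt s' \<le> sqrt (((1 + b) * sqrt s)\<^sup>2)" by (rule real_sqrt_le_mono)
  then have "sqrt s' \<le> (1 + b) * sqrt s" using assms by simp
  then show ?thesis by (simp add: algebra_simps)
qed

lemma abs_sqrt_diff_le_min:
  fixes s s' b :: real
  assumes "0 < s" "0 < s'" "0 \<le> b" "s' / s \<le> 1 + b" "s / s' \<le> 1 + b"
  shows "\<bar>sqrt s' - sqrt s\<bar> \<le> b * min (sqrt s) (sqrt s')"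
  using sqrt_diff_le_of_divide_le[of s b s'] sqrt_diff_le_of_divide_le[of s' b s] assms
  by (cases "s \<le> s'") (auto simp: min_def)

lemma abs_divide_diff_le:
  fixes a b l l' p q :: real
  assumes "0 < p" "0 < q" "0 \<le> b" "0 \<le> l'" "l' \<le> l" "l - l' \<le> a"
    and "\<bar>q - p\<bar> \<le> b * min p q"
  shows "\<bar>l / p - l' / q\<bar> \<le> (a + b * l) / min p q"
proof -
  have split: "l / p - l' / q = (l - l') / p + l' * (q - p) / (p * q)"
    using assms by (simp add: field_simps)
  have "(l - l') / p \<le> a / min p q"
    using assms by (intro frac_le) auto
  moreover have "\<bar>l' * (q - p) / (p * q)\<bar> \<le> b * l / min p q"
  proof -
    have "\<bar>l' * (q - p) / (p * q)\<bar> = l' * \<bar>q - p\<bar> / (p * q)"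
      using assms by (simp add: abs_mult)
    also have "\<dots> \<le> l' * (b * min p q) / (p * q)"
      using assms by (intro divide_right_mono mult_left_mono) auto
    also have "\<dots> = b * l' / max p q"
      using assms by (cases "p \<le> q") (auto simp: min_def max_def field_simps)
    also have "\<dots> \<le> b * l / min p q"
      using assms by (intro frac_le mult_left_mono) auto
    finally show ?thesis .
  qed
  moreover have "0 \<le> (l - l') / p" using assms by simp
  ultimately show ?thesis
    unfolding split add_divide_distrib
    using abs_triangle_ineq[of "(l - l') / p" "l' * (q - p) / (p * q)"] by linarith
qed

lemma std_normal_density_min_le:
  fixes c l l' s s' :: real
  assumes "0 \<le> l'" "l' \<le> l" "0 < s" "0 < s'" "c \<le> 1"
  shows "std_normal_density (min (l / sqrt s) (l' / sqrt s'))
           \<le> exp (- (l'\<^sup>2 * c) / (2 * max s s')) / sqrt (2 * pi)"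
proof -
  have "l' / sqrt (max s s') \<le> l / sqrt s"
    using assms by (intro frac_le) auto
  moreover have "l' / sqrt (max s s') \<le> l' / sqrt s'"
    using assms by (intro divide_left_mono) auto
  ultimately have "l' / sqrt (max s s') \<le> min (l / sqrt s) (l' / sqrt s')" by simp
  then have "(l' / sqrt (max s s'))\<^sup>2 \<le> (min (l / sqrt s) (l' / sqrt s'))\<^sup>2"
    using assms by (intro power_mono) auto
  moreover have "l'\<^sup>2 * c / max s s' \<le> (l' / sqrt (max s s'))\<^sup>2"
    using assms by (simp add: power_divide divide_right_mono mult_left_le)
  ultimately show ?thesis
    using std_normal_density_le_exp[of "l'\<^sup>2 * c / max s s'"] by (simp add: ac_simps)
qed

lemma abs_divide_sub_one_le:
  fixes p q :: real
  assumes "1 / 2 \<le> q"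
  shows "\<bar>p / q - 1\<bar> \<le> 2 * \<bar>p - q\<bar>"
proof -
  have "\<bar>p / q - 1\<bar> = \<bar>p - q\<bar> / q" using assms by (simp add: field_simps)
  also have "\<dots> \<le> \<bar>p - q\<bar> / (1 / 2)" using assms by (intro divide_left_mono) auto
  finally show ?thesis by simp
qed

lemma sqrt_8_div_pi: "sqrt (8 / pi) = 4 / sqrt (2 * pi)"
proof -
  have "sqrt (8 / pi) * sqrt (2 * pi) = 4" by (simp add: real_sqrt_mult[symmetric])
  then show ?thesis by (simp add: field_simps)
qed

theorem lemmaB3:
  fixes a b2 l1 l2 s1 s2 :: real
  assumes "a \<ge> 0" and "0 < b2" and "b2 < 1"
    and "l1 \<ge> l2" and "l2 \<ge> 0"
    and "s1 \<ge> 1" and "s2 \<ge> 1"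
    and "l1 - l2 \<le> a"
    and "s1 / s2 \<in> {1 - b2 .. 1 + b2}"
    and "s2 / s1 \<in> {1 - b2 .. 1 + b2}"
  defines "X \<equiv> sqrt (8 / pi) * (a + b2 * l1) / min (sqrt s1) (sqrt s2)
                 * exp (- (l2\<^sup>2 * (1 - b2)) / (2 * max s1 s2))"
  shows "normal_cdf l1 s1 / normal_cdf l2 s2 \<in> {1 - b2 - X .. 1 + b2 + X} \<and>
         normal_cdf l2 s2 / normal_cdf l1 s1 \<in> {1 - b2 - X .. 1 + b2 + X}"
proof -
  define t1 t2 where "t1 = l1 / sqrt s1" and "t2 = l2 / sqrt s2"
  have t: "0 \<le> t1" "0 \<le> t2" using assms by (auto simp: t1_def t2_def)
  let ?T = "(a + b2 * l1) / min (sqrt s1) (sqrt s2)"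
  let ?E = "exp (- (l2\<^sup>2 * (1 - b2)) / (2 * max s1 s2))"
  have "\<bar>t1 - t2\<bar> \<le> ?T"
    unfolding t1_def t2_def using assms abs_sqrt_diff_le_min[of s1 s2 b2]
    by (intro abs_divide_diff_le) auto
  moreover have "std_normal_density (min t1 t2) \<le> ?E / sqrt (2 * pi)"
    unfolding t1_def t2_def using assms by (intro std_normal_density_min_le) auto
  ultimately have "\<bar>t1 - t2\<bar> * std_normal_density (min t1 t2) \<le> ?T * (?E / sqrt (2 * pi))"
    by (intro mult_mono) auto
  moreover have "X = 4 * (?T * (?E / sqrt (2 * pi)))"
    by (simp add: X_def sqrt_8_div_pi algebra_simps)
  ultimately have close: "\<bar>std_normal_cdf t1 - std_normal_cdf t2\<bar> \<le> X / 4"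
    using abs_std_normal_cdf_diff_le[OF t] by linarith
  have half: "1 / 2 \<le> std_normal_cdf t1" "1 / 2 \<le> std_normal_cdf t2"
    using std_normal_cdf_ge_half[OF t(1)] std_normal_cdf_ge_half[OF t(2)] .
  have "\<bar>std_normal_cdf t1 / std_normal_cdf t2 - 1\<bar> \<le> X / 2"
    using abs_divide_sub_one_le[OF half(2), of "std_normal_cdf t1"] close by argo
  moreover have "\<bar>std_normal_cdf t2 / std_normal_cdf t1 - 1\<bar> \<le> X / 2"
    using abs_divide_sub_one_le[OF half(1), of "std_normal_cdf t2"] close
    by (simp add: abs_minus_commute)
  moreover have "0 \<le> X" using assms by (simp add: X_def)
  moreover have "normal_cdf l1 s1 = std_normal_cdf t1" "normal_cdf l2 s2 = std_normal_cdf t2"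
    using assms by (simp_all add: normal_cdf_eq_std_normal_cdf t1_def t2_def)
  ultimately show ?thesis using \<open>0 < b2\<close> unfolding atLeastAtMost_iff by simp argo
qed

end
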